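(* Let $\mathbb{A}$ be a non-empty set, $\varphi:\mathbb{A}^+\to C$ a finite coloring, $x\in\mathbb{A}^\omega$ and $k\ge1$. Then some suffix $x'$ of $x$ admits a $k$-shift invariant $\varphi$-sequentially monochromatic factorization.
   Context: $T$ denotes the shift on $\mathbb{A}^\omega$, $T(x_0x_1x_2\cdots)=x_1x_2\cdots$. A factorization $x'=V_0V_1V_2\cdots$ with all $V_i\in\mathbb{A}^+$ is $\varphi$-sequentially monochromatic if there is $c\in C$ with $\varphi(V_iV_{i+1}\cdots V_{i+j})=c$ for all $i,j\ge0$. Such a factorization is $k$-shift invariant if for every $1\le j\le k$ the induced factorization $T^j(x')=W_0W_1W_2\cdots$ with $|W_i|=|V_i|$ for all $i$ is also $\varphi$-sequentially monochromatic (the color may depend on $j$). *)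

theory Defs
  imports Main
begin

text \<open>A factorization
  V_0 V_1 V_2 ... of an infinite word with nonempty factors is encoded by its
  cut points: a strictly increasing b :: nat => nat with b 0 = 0, so that
  V_i is the factor occupying positions b i, ..., b (i+1) - 1.\<close>

definition factor :: "(nat \<Rightarrow> 'a) \<Rightarrow> nat \<Rightarrow> nat \<Rightarrow> 'a list" where
  "factor x i j = map x [i..<j]"

definition shift :: "(nat \<Rightarrow> 'a) \<Rightarrow> nat \<Rightarrow> 'a" where
  "shift x = (\<lambda>n. x (Suc n))"

definition is_factorization :: "(nat \<Rightarrow> nat) \<Rightarrow> bool" where
  "is_factorization b \<longleftrightarrow> b 0 = 0 \<and> strict_mono b"

definition seq_mono :: "('a list \<Rightarrow> 'c) \<Rightarrow> (nat \<Rightarrow> 'a) \<Rightarrow> (nat \<Rightarrow> nat) \<Rightarrow> bool" where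
  "seq_mono \<phi> x b \<longleftrightarrow> (\<exists>c. \<forall>i j. \<phi> (factor x (b i) (b (i + j + 1))) = c)"

text \<open>k-shift invariance: for 1 <= j <= k, the factorization of T^j x with the
  same factor lengths (hence the same cut points) is phi-sequentially monochromatic.\<close>
definition shift_invariant :: "nat \<Rightarrow> ('a list \<Rightarrow> 'c) \<Rightarrow> (nat \<Rightarrow> 'a) \<Rightarrow> (nat \<Rightarrow> nat) \<Rightarrow> bool" where
  "shift_invariant k \<phi> x b \<longleftrightarrow> (\<forall>j. 1 \<le> j \<and> j \<le> k \<longrightarrow> seq_mono \<phi> ((shift ^^ j) x) b)"

end

theory Submission
  imports Defs "HOL-Library.Ramsey"
begin

text \<open>Colour each pair of positions p < q by the tuple of colours
  \<open>\<phi>(x[p+j..q+j))\<close>, j = 0, \<dots>, k. This colouring takes finitely many values, so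
  by the infinite Ramsey theorem there are positions e 0 < e 1 < e 2 < \<dots> all of
  whose pairs carry the same tuple. Cutting the suffix starting at e 0 at these
  positions gives the factorization: the word \<open>V\<^sub>i \<dots> V\<^sub>i\<^sub>+\<^sub>j\<close> of the j-th shift is
  x[e i + j .. e l + j) for some i < l, whose colour is the j-th entry of the tuple.\<close>

lemma ramsey_pairs_strict_mono:
  fixes f :: "nat \<Rightarrow> nat \<Rightarrow> 'c"
  assumes "finite C" and colours: "\<And>p q. p < q \<Longrightarrow> f p q \<in> C"
  obtains e :: "nat \<Rightarrow> nat" and c
  where "strict_mono e" and "\<And>i l. i < l \<Longrightarrow> f (e i) (e l) = c"
proof -
  \<comment> \<open>The library's \<open>Ramsey2\<close> colours by naturals below a bound; h renumbers C.\<close>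
  obtain h where h: "bij_betw h C {0..<card C}"
    using ex_bij_betw_finite_nat[OF \<open>finite C\<close>] by blast
  define g where "g = (\<lambda>S::nat set. h (f (Min S) (Max S)))"
  have g_pair: "g {p, q} = h (f p q)" if "p < q" for p q
    using that by (simp add: g_def min_def max_def)
  have "g {p, q} < card C" if "p < q" for p q
    using g_pair[OF that] colours[OF that] h by (auto simp: bij_betw_def)
  then have coloured: "\<forall>p\<in>UNIV. \<forall>q\<in>UNIV. p \<noteq> q \<longrightarrow> g {p, q} < card C"
    by (metis insert_commute linorder_neqE_nat)
  obtain Y t where Y: "infinite Y" "\<forall>p\<in>Y. \<forall>q\<in>Y. p \<noteq> q \<longrightarrow> g {p, q} = t"
    using Ramsey2[OF infinite_UNIV_nat coloured] by blast
  define e where "e = enumerate Y"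
  have e: "strict_mono e" "\<And>n. e n \<in> Y"
    unfolding e_def using Y(1) by (auto intro: strict_mono_enumerate enumerate_in_set)
  have "f (e i) (e l) = f (e 0) (e 1)" if "i < l" for i l
  proof -
    have lt: "e i < e l" "e 0 < e 1" using e(1) that by (auto simp: strict_mono_less)
    have "g {e i, e l} = t" "g {e 0, e 1} = t"
      using Y(2) e(2) lt by auto
    with lt have "h (f (e i) (e l)) = h (f (e 0) (e 1))"
      by (simp add: g_pair)
    moreover have "inj_on h C" using h by (simp add: bij_betw_def)
    ultimately show ?thesis
      using colours[OF lt(1)] colours[OF lt(2)] by (simp add: inj_on_eq_iff)
  qed
  with e(1) show thesis by (rule that)
qed

lemma shift_pow_apply: "(shift ^^ n) x i = x (i + n)"
  by (induction n arbitrary: i) (auto simp: shift_def)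

lemma factor_shift_pow: "factor ((shift ^^ n) x) i j = factor x (i + n) (j + n)"
  by (induction j) (auto simp: factor_def shift_pow_apply)

lemma is_factorization_rebase:
  assumes "strict_mono e"
  shows "is_factorization (\<lambda>i. e i - e 0)"
proof -
  have "e 0 \<le> e i" for i using assms by (simp add: strict_mono_less_eq)
  with assms show ?thesis
    by (auto simp: is_factorization_def strict_mono_def intro!: diff_less_mono)
qed

lemma seq_mono_rebase:
  assumes "strict_mono e"
    and mono_pairs: "\<And>i l. i < l \<Longrightarrow> \<phi> (factor x (e i + j) (e l + j)) = c"
  shows "seq_mono \<phi> ((shift ^^ j) ((shift ^^ e 0) x)) (\<lambda>i. e i - e 0)"
proof -
  have "(shift ^^ j) ((shift ^^ e 0) x) = (shift ^^ (j + e 0)) x"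
    by (simp add: funpow_add)
  moreover have "e 0 \<le> e i" for i
    using assms(1) by (simp add: strict_mono_less_eq)
  ultimately have "factor ((shift ^^ j) ((shift ^^ e 0) x)) (e i - e 0) (e l - e 0)
      = factor x (e i + j) (e l + j)" for i l
    by (simp add: factor_shift_pow)
  then show ?thesis
    unfolding seq_mono_def using mono_pairs by (intro exI[of _ c]) simp
qed

theorem corollary3p2:
  fixes A :: "'a set" and C :: "'c set" and \<phi> :: "'a list \<Rightarrow> 'c"
    and x :: "nat \<Rightarrow> 'a" and k :: nat
  assumes "A \<noteq> {}"
    and "finite C"
    and "\<And>w. w \<noteq> [] \<Longrightarrow> set w \<subseteq> A \<Longrightarrow> \<phi> w \<in> C"
    and "\<And>n. x n \<in> A"
    and "k \<ge> 1"
  shows "\<exists>m b. is_factorization b \<and> seq_mono \<phi> ((shift ^^ m) x) b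
               \<and> shift_invariant k \<phi> ((shift ^^ m) x) b"
proof -
  define tuple where "tuple p q = map (\<lambda>j. \<phi> (factor x (p + j) (q + j))) [0..<Suc k]" for p q
  have "\<phi> (factor x (p + j) (q + j)) \<in> C" if "p < q" for p q j
    using that assms(4) by (intro assms(3)) (auto simp: factor_def)
  then have tuple_colour: "tuple p q \<in> {l. set l \<subseteq> C \<and> length l = Suc k}" if "p < q" for p q
    using that by (auto simp: tuple_def)
  obtain e :: "nat \<Rightarrow> nat" and c
    where e: "strict_mono e" and c: "\<And>i l. i < l \<Longrightarrow> tuple (e i) (e l) = c"
    using ramsey_pairs_strict_mono[where f = tuple,
        OF finite_lists_length_eq[OF \<open>finite C\<close>] tuple_colour]
    by blast
  have seq: "seq_mono \<phi> ((shift ^^ j) ((shift ^^ e 0) x)) (\<lambda>i. e i - e 0)" if "j \<le> k" for j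
  proof (rule seq_mono_rebase[OF e])
    fix i l :: nat
    assume "i < l"
    from c[OF this] show "\<phi> (factor x (e i + j) (e l + j)) = c ! j"
      using \<open>j \<le> k\<close> by (auto simp: tuple_def simp del: upt_Suc)
  qed
  show ?thesis
    using is_factorization_rebase[OF e] seq[of 0] seq
    by (intro exI[of _ "e 0"] exI[of _ "\<lambda>i. e i - e 0"]) (auto simp: shift_invariant_def)
qed

end
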